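(* Let $n\ge 2$. The completely isolated subsemigroups of $\overline{\mathcal{PI}^{\ast}}_n$ are exactly $\overline{\mathcal{PI}^{\ast}}_n$, $\mathcal{S}_n$ and $\overline{\mathcal{PI}^{\ast}}_n\setminus\mathcal{S}_n$.
   Context: Let $X=\{1,\dots,n\}$, $X'=\{1',\dots,n'\}$. $\overline{\mathcal{PI}^{\ast}}_n$ is the set of partitions of $X\cup X'$ each of whose blocks is a singleton (point) or a generalised line (a set meeting both $X$ and $X'$), with product $\circ$: $\alpha\circ\beta$ has as generalised lines exactly the sets $A\cup D'$ such that $A\cup B'$ is a generalised line of $\alpha$ and $B\cup D'$ is a generalised line of $\beta$ (for the same $B\subseteq X$), all other elements being points. $\mathcal{S}_n$ is its group of units: elements all of whose blocks are $\{x,\pi(x)'\}$ for a permutation $\pi$ of $X$. A subsemigroup $T$ of a semigroup $S$ is completely isolated if for all $a,b\in S$, $ab\in T$ implies $a\in T$ or $b\in T$. *)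

theory Defs
  imports "HOL-Library.Disjoint_Sets"
begin

text \<open>Points of X \<union> X': (i, False) is i \<in> X, (i, True) is i' \<in> X'.\<close>

definition Omega :: "nat \<Rightarrow> (nat \<times> bool) set" where
  "Omega n = {1..n} \<times> UNIV"

definition top_part :: "(nat \<times> bool) set \<Rightarrow> nat set" where
  "top_part b = {i. (i, False) \<in> b}"

definition bot_part :: "(nat \<times> bool) set \<Rightarrow> nat set" where
  "bot_part b = {i. (i, True) \<in> b}"

definition mk_block :: "nat set \<Rightarrow> nat set \<Rightarrow> (nat \<times> bool) set" where
  "mk_block A D = (\<lambda>i. (i, False)) ` A \<union> (\<lambda>i. (i, True)) ` D"

definition is_gline :: "(nat \<times> bool) set \<Rightarrow> bool" where
  "is_gline b \<longleftrightarrow> top_part b \<noteq> {} \<and> bot_part b \<noteq> {}"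

definition PIstar :: "nat \<Rightarrow> (nat \<times> bool) set set set" where
  "PIstar n = {P. partition_on (Omega n) P \<and> (\<forall>b\<in>P. is_singleton b \<or> is_gline b)}"

definition glines :: "(nat \<times> bool) set set \<Rightarrow> (nat \<times> bool) set set" where
  "glines P = {b \<in> P. is_gline b}"

definition comp :: "nat \<Rightarrow> (nat \<times> bool) set set \<Rightarrow> (nat \<times> bool) set set \<Rightarrow> (nat \<times> bool) set set" where
  "comp n \<alpha> \<beta> =
     (let L = {mk_block (top_part a) (bot_part b) | a b.
                 a \<in> glines \<alpha> \<and> b \<in> glines \<beta> \<and> bot_part a = top_part b}
      in L \<union> {{x} | x. x \<in> Omega n \<and> x \<notin> \<Union>L})"

definition Sym :: "nat \<Rightarrow> (nat \<times> bool) set set set" where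
  "Sym n = {P. \<exists>\<pi>. bij_betw \<pi> {1..n} {1..n} \<and>
                   P = {{(x, False), (\<pi> x, True)} | x. x \<in> {1..n}}}"

text \<open>Subsemigroups are nonempty (standard convention).\<close>
definition subsemigroup :: "nat \<Rightarrow> (nat \<times> bool) set set set \<Rightarrow> bool" where
  "subsemigroup n T \<longleftrightarrow> T \<noteq> {} \<and> T \<subseteq> PIstar n \<and> (\<forall>a\<in>T. \<forall>b\<in>T. comp n a b \<in> T)"

definition completely_isolated :: "nat \<Rightarrow> (nat \<times> bool) set set set \<Rightarrow> bool" where
  "completely_isolated n T \<longleftrightarrow> subsemigroup n T \<and>
     (\<forall>a\<in>PIstar n. \<forall>b\<in>PIstar n. comp n a b \<in> T \<longrightarrow> a \<in> T \<or> b \<in> T)"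

end

(* An element is determined by its generalised lines, and its rank, the number of these lines,
   does not increase under composition; the units are exactly the elements of rank n.  Hence Sym n
   and its complement are completely isolated.  Conversely, if T is completely isolated then T and
   its complement are both closed, and each closed set of units contains the identity (a power of
   any permutation), so T contains all units or none.  Whichever of T and its complement contains
   the zero (rank 0) contains all non-units: by induction on the rank, x lies in it as soon as its
   square does, in particular when the square has smaller rank, and every non-unit either has a
   square of smaller rank or is a product of two such elements. *)

theory Submission
  imports Defs "HOL-Combinatorics.Cycles"
begin

lemma disjoint_family_on_image:
  "disjoint_family_on (\<lambda>l. g (f l)) L \<Longrightarrow> disjoint_family_on g (f ` L)"
  unfolding disjoint_family_on_def by (metis comp_apply imageE)

lemma card_le_of_disjoint_family:
  assumes "finite S" "finite L" "disjoint_family_on A L" "\<And>l. l \<in> L \<Longrightarrow> A l \<noteq> {} \<and> A l \<subseteq> S"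
  shows "card L \<le> card S"
proof -
  have fin: "finite (A l)" if "l \<in> L" for l
    using assms(1,4) that finite_subset by blast
  have "card L = (\<Sum>l\<in>L. 1)"
    by simp
  also have "\<dots> \<le> (\<Sum>l\<in>L. card (A l))"
    using assms(4) fin by (intro sum_mono) (simp add: Suc_le_eq card_gt_0_iff)
  also have "\<dots> = card (\<Union>(A ` L))"
    using assms(2,3) fin by (simp add: card_UN_disjoint disjoint_family_on_def)
  also have "\<dots> \<le> card S"
    using assms by (intro card_mono) auto
  finally show ?thesis .
qed

lemma disjoint_family_tight:
  assumes "finite S" "finite L" "disjoint_family_on A L" "\<And>l. l \<in> L \<Longrightarrow> A l \<noteq> {} \<and> A l \<subseteq> S"
    and "card S \<le> card L"
  shows "\<forall>l \<in> L. card (A l) = 1" and "\<Union>(A ` L) = S"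
proof -
  have fin: "finite (A l)" if "l \<in> L" for l
    using assms(1,4) that finite_subset by blast
  have pos: "1 \<le> card (A l)" if "l \<in> L" for l
    using assms(4)[OF that] fin[OF that] by (simp add: Suc_le_eq card_gt_0_iff)
  have union_card: "card (\<Union>(A ` L)) = (\<Sum>l\<in>L. card (A l))"
    using assms(2,3) fin by (simp add: card_UN_disjoint disjoint_family_on_def)
  have union_sub: "\<Union>(A ` L) \<subseteq> S"
    using assms(4) by blast
  have "(\<Sum>l\<in>L. 1) \<le> (\<Sum>l\<in>L. card (A l))"
    using pos by (rule sum_mono)
  moreover have "card (\<Union>(A ` L)) \<le> card S"
    using assms(1) union_sub by (rule card_mono)
  ultimately have sum_eq: "(\<Sum>l\<in>L. 1) = (\<Sum>l\<in>L. card (A l))" and "card S \<le> card (\<Union>(A ` L))"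
    using assms(5) union_card by simp_all
  then show "\<Union>(A ` L) = S"
    by (intro card_seteq[OF assms(1) union_sub]) simp
  show "\<forall>l \<in> L. card (A l) = 1"
    using sum_mono_inv[OF sum_eq pos _ assms(2)] by simp
qed

lemma disjoint_family_singletons:
  assumes "finite S" "finite L" "disjoint_family_on A L" "\<And>l. l \<in> L \<Longrightarrow> A l \<noteq> {} \<and> A l \<subseteq> S"
    and "card S \<le> card L"
  shows "\<And>l. l \<in> L \<Longrightarrow> A l = {the_elem (A l)}" and "bij_betw (\<lambda>l. the_elem (A l)) L S"
proof -
  note tight = disjoint_family_tight[of S L A, OF assms]
  show single: "A l = {the_elem (A l)}" if "l \<in> L" for l
    using tight(1) that by (auto simp: card_1_singleton_iff)
  have "inj_on (\<lambda>l. the_elem (A l)) L"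
  proof (rule inj_onI)
    fix l l' assume l: "l \<in> L" and l': "l' \<in> L" and eq: "the_elem (A l) = the_elem (A l')"
    have "A l = A l'"
      using single[OF l] single[OF l'] eq by metis
    then have "A l \<inter> A l' \<noteq> {}"
      using assms(4)[OF l] by simp
    with l l' assms(3) show "l = l'"
      by (meson disjoint_family_onD)
  qed
  moreover have "A ` L = (\<lambda>l. {the_elem (A l)}) ` L"
    using single by (rule image_cong[OF refl])
  then have "(\<lambda>l. the_elem (A l)) ` L = S"
    using tight(2) by auto
  ultimately show "bij_betw (\<lambda>l. the_elem (A l)) L S"
    by (simp add: bij_betw_def)
qed

lemma inj_on_into_hitting:
  assumes "finite L" "finite S" "card L \<le> card S" "k \<in> S" "l0 \<in> L"
  obtains f where "inj_on f L" "f ` L \<subseteq> S" "f l0 = k"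
proof -
  obtain g where g: "g ` L \<subseteq> S" "inj_on g L"
    using card_le_inj[OF assms(1-3)] by blast
  let ?f = "transpose k (g l0) \<circ> g"
  have "inj_on ?f L"
    using g(2) by (simp add: comp_inj_on)
  moreover have "?f ` L \<subseteq> S"
    using g(1) assms(4,5) by (auto simp: transpose_def)
  moreover have "?f l0 = k"
    by simp
  ultimately show ?thesis
    using that by blast
qed

section \<open>Blocks and line systems\<close>

lemma top_part_mk_block [simp]: "top_part (mk_block A D) = A"
  by (auto simp: top_part_def mk_block_def)

lemma bot_part_mk_block [simp]: "bot_part (mk_block A D) = D"
  by (auto simp: bot_part_def mk_block_def)

lemma mk_block_parts [simp]: "mk_block (top_part b) (bot_part b) = b"
proof (rule set_eqI)
  fix x :: "nat \<times> bool"
  show "x \<in> mk_block (top_part b) (bot_part b) \<longleftrightarrow> x \<in> b"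
    by (cases x, cases "snd x") (auto simp: top_part_def bot_part_def mk_block_def)
qed

lemma mk_block_eq_iff: "mk_block A D = mk_block A' D' \<longleftrightarrow> A = A' \<and> D = D'"
  by (metis top_part_mk_block bot_part_mk_block)

lemma mk_block_Int: "mk_block A D \<inter> mk_block A' D' = mk_block (A \<inter> A') (D \<inter> D')"
  by (auto simp: mk_block_def)

lemma mk_block_empty_iff: "mk_block A D = {} \<longleftrightarrow> A = {} \<and> D = {}"
  by (auto simp: mk_block_def)

lemma UN_mk_block: "(\<Union>i\<in>I. mk_block (A i) (D i)) = mk_block (\<Union>i\<in>I. A i) (\<Union>i\<in>I. D i)"
  by (auto simp: mk_block_def)

lemma Omega_eq_mk_block: "Omega n = mk_block {1..n} {1..n}"
proof (rule set_eqI)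
  fix x :: "nat \<times> bool"
  show "x \<in> Omega n \<longleftrightarrow> x \<in> mk_block {1..n} {1..n}"
    by (cases x, cases "snd x") (auto simp: Omega_def mk_block_def)
qed

lemma mk_block_subset_iff: "mk_block A D \<subseteq> mk_block A' D' \<longleftrightarrow> A \<subseteq> A' \<and> D \<subseteq> D'"
  by (auto simp: mk_block_def)

lemma subset_Omega_iff: "b \<subseteq> Omega n \<longleftrightarrow> top_part b \<subseteq> {1..n} \<and> bot_part b \<subseteq> {1..n}"
  by (metis mk_block_parts Omega_eq_mk_block mk_block_subset_iff)

lemma top_part_empty [simp]: "top_part {} = {}"
  and bot_part_empty [simp]: "bot_part {} = {}"
  by (simp_all add: top_part_def bot_part_def)

lemma top_part_Int: "top_part (b \<inter> c) = top_part b \<inter> top_part c"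
  and bot_part_Int: "bot_part (b \<inter> c) = bot_part b \<inter> bot_part c"
  by (auto simp: top_part_def bot_part_def)

lemma not_is_gline_singleton: "\<not> is_gline {x}"
  by (auto simp: is_gline_def top_part_def bot_part_def)

text \<open>An element of \<open>PIstar n\<close> is determined by its set of generalised lines, from which
  \<open>of_lines\<close> restores the points; \<open>line_system n\<close> characterises the sets of lines that occur.\<close>

definition line_system :: "nat \<Rightarrow> (nat \<times> bool) set set \<Rightarrow> bool" where
  "line_system n L \<longleftrightarrow>
     (\<forall>l\<in>L. top_part l \<noteq> {} \<and> top_part l \<subseteq> {1..n} \<and> bot_part l \<noteq> {} \<and> bot_part l \<subseteq> {1..n}) \<and>
     disjoint_family_on top_part L \<and> disjoint_family_on bot_part L"

definition of_lines :: "nat \<Rightarrow> (nat \<times> bool) set set \<Rightarrow> (nat \<times> bool) set set" where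
  "of_lines n L = L \<union> (\<lambda>x. {x}) ` (Omega n - \<Union>L)"

lemma line_system_top_unique:
  assumes "line_system n L" "l \<in> L" "l' \<in> L" "top_part l = top_part l'"
  shows "l = l'"
  using assms unfolding line_system_def disjoint_family_on_def by (metis Int_absorb)

lemma line_system_bot_unique:
  assumes "line_system n L" "l \<in> L" "l' \<in> L" "bot_part l = bot_part l'"
  shows "l = l'"
  using assms unfolding line_system_def disjoint_family_on_def by (metis Int_absorb)

lemma line_system_top_disjoint:
  assumes "line_system n L" "l \<in> L" "l' \<in> L" "l \<noteq> l'"
  shows "top_part l \<inter> top_part l' = {}"
  using assms(1) disjoint_family_onD[OF _ assms(2-4)] unfolding line_system_def by blast

lemma line_system_bot_disjoint:
  assumes "line_system n L" "l \<in> L" "l' \<in> L" "l \<noteq> l'"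
  shows "bot_part l \<inter> bot_part l' = {}"
  using assms(1) disjoint_family_onD[OF _ assms(2-4)] unfolding line_system_def by blast

lemma line_system_finite:
  assumes "line_system n L"
  shows "finite L"
proof (rule finite_subset)
  show "L \<subseteq> Pow (Omega n)"
  proof
    fix l assume "l \<in> L"
    with assms show "l \<in> Pow (Omega n)"
      by (simp add: line_system_def subset_Omega_iff)
  qed
  show "finite (Pow (Omega n))"
    by (simp add: Omega_def)
qed

lemma line_system_image:
  assumes "\<And>l. l \<in> L \<Longrightarrow> A l \<noteq> {} \<and> A l \<subseteq> {1..n} \<and> D l \<noteq> {} \<and> D l \<subseteq> {1..n}"
    and "disjoint_family_on A L" "disjoint_family_on D L"
  shows "line_system n ((\<lambda>l. mk_block (A l) (D l)) ` L)"
  unfolding line_system_def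
proof (intro conjI disjoint_family_on_image)
  show "disjoint_family_on (\<lambda>l. top_part (mk_block (A l) (D l))) L"
    using assms(2) by simp
  show "disjoint_family_on (\<lambda>l. bot_part (mk_block (A l) (D l))) L"
    using assms(3) by simp
qed (use assms(1) in auto)

lemma line_system_Int:
  assumes "line_system n L" "l \<in> L" "l' \<in> L" "l \<noteq> l'"
  shows "l \<inter> l' = {}"
proof -
  have "l \<inter> l' = mk_block (top_part l \<inter> top_part l') (bot_part l \<inter> bot_part l')"
    by (metis mk_block_Int mk_block_parts)
  also have "\<dots> = {}"
    using line_system_top_disjoint[OF assms] line_system_bot_disjoint[OF assms]
    by (simp add: mk_block_empty_iff)
  finally show ?thesis .
qed

lemma line_system_lines:
  assumes "line_system n L" "l \<in> L"
  shows "is_gline l" "l \<subseteq> Omega n"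
  using assms by (auto simp: line_system_def is_gline_def subset_Omega_iff)

lemma of_lines_in_PIstar:
  assumes "line_system n L"
  shows "of_lines n L \<in> PIstar n"
proof -
  note lines = line_system_lines[OF assms]
  have "disjoint (of_lines n L)"
  proof (rule disjointI)
    fix b c assume "b \<in> of_lines n L" "c \<in> of_lines n L" "b \<noteq> c"
    then show "b \<inter> c = {}"
      using line_system_Int[OF assms] by (auto simp: of_lines_def)
  qed
  moreover have "\<Union>(of_lines n L) = Omega n"
    using lines(2) by (auto simp: of_lines_def)
  moreover have "{} \<notin> of_lines n L"
    using lines(1) by (auto simp: of_lines_def is_gline_def top_part_def)
  ultimately show ?thesis
    using lines(1) by (auto simp: PIstar_def partition_on_def of_lines_def)
qed

lemma glines_of_lines:
  assumes "line_system n L"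
  shows "glines (of_lines n L) = L"
  using line_system_lines[OF assms] by (auto simp: glines_def of_lines_def not_is_gline_singleton)

lemma line_system_glines:
  assumes "a \<in> PIstar n"
  shows "line_system n (glines a)"
proof -
  have part: "partition_on (Omega n) a"
    using assms by (simp add: PIstar_def)
  have lines: "is_gline l" "l \<subseteq> Omega n" if "l \<in> glines a" for l
    using that partition_onD1[OF part] by (auto simp: glines_def)
  have "l \<inter> l' = {}" if "l \<in> glines a" "l' \<in> glines a" "l \<noteq> l'" for l l'
    using that disjointD[OF partition_onD2[OF part]] by (simp add: glines_def)
  then have "disjoint_family_on top_part (glines a)" "disjoint_family_on bot_part (glines a)"
    unfolding disjoint_family_on_def
    by (metis top_part_Int top_part_empty, metis bot_part_Int bot_part_empty)
  with lines show ?thesis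
    by (auto simp: line_system_def is_gline_def subset_Omega_iff)
qed

lemma PIstar_point_block:
  assumes "a \<in> PIstar n" "x \<in> Omega n" "x \<notin> \<Union>(glines a)"
  shows "{x} \<in> a"
proof -
  have "x \<in> \<Union>a"
    using assms(1,2) partition_onD1[of "Omega n" a] by (simp add: PIstar_def)
  then obtain b where b: "b \<in> a" "x \<in> b"
    by blast
  with assms(3) have "\<not> is_gline b"
    unfolding glines_def by blast
  with assms(1) b(1) have "is_singleton b"
    by (auto simp: PIstar_def)
  then obtain y where "b = {y}"
    by (rule is_singletonE)
  with b show ?thesis
    by simp
qed

lemma PIstar_block_cases:
  assumes a: "a \<in> PIstar n" and b: "b \<in> a"
  shows "b \<in> glines a \<or> (\<exists>x \<in> Omega n - \<Union>(glines a). b = {x})"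
proof (cases "is_gline b")
  case False
  have part: "partition_on (Omega n) a"
    using a by (simp add: PIstar_def)
  obtain x where x: "b = {x}"
    using a b False by (auto simp: PIstar_def is_singleton_def)
  have "x \<in> \<Union>a"
    using b x by blast
  then have "x \<in> Omega n"
    using partition_onD1[OF part] by simp
  moreover have "x \<notin> l" if "l \<in> glines a" for l
  proof -
    have "l \<in> a" "b \<noteq> l"
      using that False unfolding glines_def by blast+
    then show ?thesis
      using disjointD[OF partition_onD2[OF part] b] x by blast
  qed
  ultimately show ?thesis
    using x by blast
qed (use b in \<open>simp add: glines_def\<close>)

lemma of_lines_glines:
  assumes "a \<in> PIstar n"
  shows "of_lines n (glines a) = a"
proof
  show "of_lines n (glines a) \<subseteq> a"
    using PIstar_point_block[OF assms] unfolding of_lines_def glines_def by blast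
  show "a \<subseteq> of_lines n (glines a)"
    using PIstar_block_cases[OF assms] unfolding of_lines_def by blast
qed

lemma of_lines_covering: "\<Union>L = Omega n \<Longrightarrow> of_lines n L = L"
  by (auto simp: of_lines_def)

section \<open>Composition and rank\<close>

definition line_comp :: "(nat \<times> bool) set set \<Rightarrow> (nat \<times> bool) set set \<Rightarrow> (nat \<times> bool) set set" where
  "line_comp A B =
     {mk_block (top_part l) (bot_part l') | l l'. l \<in> A \<and> l' \<in> B \<and> bot_part l = top_part l'}"

definition matching_pairs ::
    "(nat \<times> bool) set set \<Rightarrow> (nat \<times> bool) set set \<Rightarrow> ((nat \<times> bool) set \<times> (nat \<times> bool) set) set" where
  "matching_pairs A B = {p \<in> A \<times> B. bot_part (fst p) = top_part (snd p)}"

definition rank :: "(nat \<times> bool) set set \<Rightarrow> nat" where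
  "rank a = card (glines a)"

lemma comp_eq_of_lines: "comp n a b = of_lines n (line_comp (glines a) (glines b))"
  unfolding comp_def of_lines_def line_comp_def Let_def by blast

lemma line_comp_eq_image:
  "line_comp A B = (\<lambda>p. mk_block (top_part (fst p)) (bot_part (snd p))) ` matching_pairs A B"
  unfolding line_comp_def matching_pairs_def by force

lemma inj_on_fst_matching_pairs:
  assumes "line_system n B"
  shows "inj_on fst (matching_pairs A B)"
proof (rule inj_onI)
  fix p p' assume p: "p \<in> matching_pairs A B" and p': "p' \<in> matching_pairs A B" and eq: "fst p = fst p'"
  have "snd p \<in> B" "snd p' \<in> B" "top_part (snd p) = top_part (snd p')"
    using p p' eq by (auto simp: matching_pairs_def)
  then have "snd p = snd p'"
    by (rule line_system_top_unique[OF assms])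
  with eq show "p = p'"
    by (simp add: prod_eq_iff)
qed

lemma inj_on_snd_matching_pairs:
  assumes "line_system n A"
  shows "inj_on snd (matching_pairs A B)"
proof (rule inj_onI)
  fix p p' assume p: "p \<in> matching_pairs A B" and p': "p' \<in> matching_pairs A B" and eq: "snd p = snd p'"
  have "fst p \<in> A" "fst p' \<in> A" "bot_part (fst p) = bot_part (fst p')"
    using p p' eq by (auto simp: matching_pairs_def)
  then have "fst p = fst p'"
    by (rule line_system_bot_unique[OF assms])
  with eq show "p = p'"
    by (simp add: prod_eq_iff)
qed

lemma line_system_line_comp:
  assumes A: "line_system n A" and B: "line_system n B"
  shows "line_system n (line_comp A B)"
  unfolding line_comp_eq_image
proof (rule line_system_image)
  let ?M = "matching_pairs A B"
  have ends: "fst p \<in> A" "snd p \<in> B" if "p \<in> ?M" for p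
    using that by (auto simp: matching_pairs_def)
  then show "top_part (fst p) \<noteq> {} \<and> top_part (fst p) \<subseteq> {1..n} \<and>
      bot_part (snd p) \<noteq> {} \<and> bot_part (snd p) \<subseteq> {1..n}" if "p \<in> ?M" for p
    using A B that by (simp add: line_system_def)
  show "disjoint_family_on (\<lambda>p. top_part (fst p)) ?M"
    unfolding disjoint_family_on_def
    using ends inj_on_contraD[OF inj_on_fst_matching_pairs[OF B]] line_system_top_disjoint[OF A]
    by blast
  show "disjoint_family_on (\<lambda>p. bot_part (snd p)) ?M"
    unfolding disjoint_family_on_def
    using ends inj_on_contraD[OF inj_on_snd_matching_pairs[OF A]] line_system_bot_disjoint[OF B]
    by blast
qed

lemma card_line_comp_le_matched:
  assumes A: "line_system n A" and B: "line_system n B"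
  shows "card (line_comp A B) \<le> card {l \<in> A. \<exists>l' \<in> B. bot_part l = top_part l'}"
    and "card (line_comp A B) \<le> card {l' \<in> B. \<exists>l \<in> A. bot_part l = top_part l'}"
proof -
  let ?M = "matching_pairs A B"
  have "finite ?M"
    using line_system_finite[OF A] line_system_finite[OF B]
    by (rule finite_subset[OF _ finite_cartesian_product, rotated 1]) (auto simp: matching_pairs_def)
  then have "card (line_comp A B) \<le> card ?M"
    unfolding line_comp_eq_image by (rule card_image_le)
  moreover have "card (fst ` ?M) = card ?M" "card (snd ` ?M) = card ?M"
    by (simp_all add: card_image inj_on_fst_matching_pairs[OF B] inj_on_snd_matching_pairs[OF A])
  moreover have "fst ` ?M = {l \<in> A. \<exists>l' \<in> B. bot_part l = top_part l'}"
    "snd ` ?M = {l' \<in> B. \<exists>l \<in> A. bot_part l = top_part l'}"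
    by (force simp: matching_pairs_def)+
  ultimately show "card (line_comp A B) \<le> card {l \<in> A. \<exists>l' \<in> B. bot_part l = top_part l'}"
    "card (line_comp A B) \<le> card {l' \<in> B. \<exists>l \<in> A. bot_part l = top_part l'}"
    by simp_all
qed

lemma comp_in_PIstar: "a \<in> PIstar n \<Longrightarrow> b \<in> PIstar n \<Longrightarrow> comp n a b \<in> PIstar n"
  unfolding comp_eq_of_lines by (intro of_lines_in_PIstar line_system_line_comp line_system_glines)

lemma glines_comp:
  "a \<in> PIstar n \<Longrightarrow> b \<in> PIstar n \<Longrightarrow> glines (comp n a b) = line_comp (glines a) (glines b)"
  unfolding comp_eq_of_lines by (intro glines_of_lines line_system_line_comp line_system_glines)

lemma rank_comp_le_matched:
  assumes a: "a \<in> PIstar n" and b: "b \<in> PIstar n"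
  shows "rank (comp n a b) \<le> card {l \<in> glines a. \<exists>l' \<in> glines b. bot_part l = top_part l'}"
    and "rank (comp n a b) \<le> card {l' \<in> glines b. \<exists>l \<in> glines a. bot_part l = top_part l'}"
  unfolding rank_def glines_comp[OF a b]
  by (rule card_line_comp_le_matched[OF line_system_glines[OF a] line_system_glines[OF b]])+

lemma rank_comp_le:
  assumes a: "a \<in> PIstar n" and b: "b \<in> PIstar n"
  shows "rank (comp n a b) \<le> rank a" and "rank (comp n a b) \<le> rank b"
proof -
  have "card {l \<in> glines a. \<exists>l' \<in> glines b. bot_part l = top_part l'} \<le> rank a"
    "card {l' \<in> glines b. \<exists>l \<in> glines a. bot_part l = top_part l'} \<le> rank b"
    unfolding rank_def using line_system_finite[OF line_system_glines[OF a]]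
      line_system_finite[OF line_system_glines[OF b]]
    by (auto intro: card_mono)
  with rank_comp_le_matched[OF a b] show "rank (comp n a b) \<le> rank a" "rank (comp n a b) \<le> rank b"
    by linarith+
qed

lemma rank_comp_less_left:
  assumes a: "a \<in> PIstar n" and b: "b \<in> PIstar n"
    and l: "l \<in> glines a" and unmatched: "\<forall>l' \<in> glines b. bot_part l \<noteq> top_part l'"
  shows "rank (comp n a b) < rank a"
proof -
  have "card {l \<in> glines a. \<exists>l' \<in> glines b. bot_part l = top_part l'} < rank a"
    unfolding rank_def using l unmatched line_system_finite[OF line_system_glines[OF a]]
    by (intro psubset_card_mono) auto
  with rank_comp_le_matched(1)[OF a b] show ?thesis
    by linarith
qed

lemma rank_comp_less_right:
  assumes a: "a \<in> PIstar n" and b: "b \<in> PIstar n"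
    and l': "l' \<in> glines b" and unmatched: "\<forall>l \<in> glines a. bot_part l \<noteq> top_part l'"
  shows "rank (comp n a b) < rank b"
proof -
  have "card {l' \<in> glines b. \<exists>l \<in> glines a. bot_part l = top_part l'} < rank b"
    unfolding rank_def using l' unmatched line_system_finite[OF line_system_glines[OF b]]
    by (intro psubset_card_mono) auto
  with rank_comp_le_matched(2)[OF a b] show ?thesis
    by linarith
qed

definition comp_closed :: "nat \<Rightarrow> (nat \<times> bool) set set set \<Rightarrow> bool" where
  "comp_closed n T \<longleftrightarrow> (\<forall>a\<in>T. \<forall>b\<in>T. comp n a b \<in> T)"

definition isolated :: "nat \<Rightarrow> (nat \<times> bool) set set set \<Rightarrow> bool" where
  "isolated n T \<longleftrightarrow> (\<forall>a\<in>PIstar n. \<forall>b\<in>PIstar n. comp n a b \<in> T \<longrightarrow> a \<in> T \<or> b \<in> T)"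

lemma comp_closed_complement_iff: "comp_closed n (PIstar n - T) \<longleftrightarrow> isolated n T"
  by (auto simp: comp_closed_def isolated_def comp_in_PIstar)

lemma isolated_complement_iff:
  "T \<subseteq> PIstar n \<Longrightarrow> isolated n (PIstar n - T) \<longleftrightarrow> comp_closed n T"
  by (auto simp: comp_closed_def isolated_def comp_in_PIstar)

section \<open>The units\<close>

definition perm_elem :: "nat \<Rightarrow> (nat \<Rightarrow> nat) \<Rightarrow> (nat \<times> bool) set set" where
  "perm_elem n p = (\<lambda>i. mk_block {i} {p i}) ` {1..n}"

lemma perm_elem_eq_pairs: "perm_elem n p = {{(x, False), (p x, True)} | x. x \<in> {1..n}}"
proof -
  have "{(x, False), (p x, True)} = mk_block {x} {p x}" for x
    by (auto simp: mk_block_def)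
  then show ?thesis
    unfolding perm_elem_def by (simp only: Setcompr_eq_image)
qed

lemma Sym_eq: "Sym n = {perm_elem n p | p. bij_betw p {1..n} {1..n}}"
  unfolding Sym_def perm_elem_eq_pairs by blast

lemma perm_elem_in_Sym: "bij_betw p {1..n} {1..n} \<Longrightarrow> perm_elem n p \<in> Sym n"
  unfolding Sym_eq by blast

lemma SymE:
  assumes "a \<in> Sym n"
  obtains p where "p permutes {1..n}" "a = perm_elem n p"
proof -
  obtain p where p: "bij_betw p {1..n} {1..n}" "a = perm_elem n p"
    using assms unfolding Sym_eq by blast
  define p' where "p' i = (if i \<in> {1..n} then p i else i)" for i
  have "bij_betw p' {1..n} {1..n}"
    using p(1) by (rule bij_betw_cong[THEN iffD1, rotated]) (simp add: p'_def)
  then have "p' permutes {1..n}"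
    by (rule bij_imp_permutes) (auto simp: p'_def)
  moreover have "perm_elem n p' = a"
    unfolding p(2) perm_elem_def by (intro image_cong) (simp_all add: p'_def)
  ultimately show ?thesis
    using that by blast
qed

lemma line_system_perm_elem:
  assumes "bij_betw p {1..n} {1..n}"
  shows "line_system n (perm_elem n p)"
  unfolding perm_elem_def
proof (rule line_system_image)
  show "disjoint_family_on (\<lambda>i. {i}) {1..n}"
    by (simp add: disjoint_family_on_def)
  show "disjoint_family_on (\<lambda>i. {p i}) {1..n}"
    using bij_betw_imp_inj_on[OF assms] by (auto simp: disjoint_family_on_def dest: inj_onD)
qed (use bij_betw_imp_surj_on[OF assms] in auto)

lemma perm_elem_covers:
  assumes "bij_betw p {1..n} {1..n}"
  shows "\<Union>(perm_elem n p) = Omega n"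
proof -
  have "(\<Union>i\<in>{1..n}. {p i}) = {1..n}"
    using bij_betw_imp_surj_on[OF assms] by blast
  then show ?thesis
    by (simp add: perm_elem_def UN_mk_block Omega_eq_mk_block)
qed

lemma of_lines_perm_elem:
  "bij_betw p {1..n} {1..n} \<Longrightarrow> of_lines n (perm_elem n p) = perm_elem n p"
  by (rule of_lines_covering[OF perm_elem_covers])

lemma perm_elem_in_PIstar: "bij_betw p {1..n} {1..n} \<Longrightarrow> perm_elem n p \<in> PIstar n"
  by (metis of_lines_in_PIstar line_system_perm_elem of_lines_perm_elem)

lemma rank_perm_elem:
  assumes "bij_betw p {1..n} {1..n}"
  shows "rank (perm_elem n p) = n"
proof -
  have "inj_on (\<lambda>i. mk_block {i} {p i}) {1..n}"
    by (rule inj_onI) (simp add: mk_block_eq_iff)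
  then show ?thesis
    using glines_of_lines[OF line_system_perm_elem[OF assms]] of_lines_perm_elem[OF assms]
    by (simp add: rank_def perm_elem_def card_image)
qed

lemma line_comp_perm_elem:
  assumes "p ` {1..n} \<subseteq> {1..n}"
  shows "line_comp (perm_elem n p) (perm_elem n q) = perm_elem n (q \<circ> p)"
proof
  show "line_comp (perm_elem n p) (perm_elem n q) \<subseteq> perm_elem n (q \<circ> p)"
    unfolding line_comp_def perm_elem_def by auto
  show "perm_elem n (q \<circ> p) \<subseteq> line_comp (perm_elem n p) (perm_elem n q)"
  proof
    fix l assume "l \<in> perm_elem n (q \<circ> p)"
    then obtain i where i: "i \<in> {1..n}" "l = mk_block {i} {q (p i)}"
      by (auto simp: perm_elem_def)
    moreover have "p i \<in> {1..n}"
      using assms i(1) by blast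
    ultimately have "mk_block {i} {p i} \<in> perm_elem n p" "mk_block {p i} {q (p i)} \<in> perm_elem n q"
      unfolding perm_elem_def by (blast intro: imageI)+
    then show "l \<in> line_comp (perm_elem n p) (perm_elem n q)"
      unfolding line_comp_def i(2)
      by (intro CollectI exI[of _ "mk_block {i} {p i}"] exI[of _ "mk_block {p i} {q (p i)}"]) simp
  qed
qed

lemma comp_perm_elem:
  assumes p: "bij_betw p {1..n} {1..n}" and q: "bij_betw q {1..n} {1..n}"
  shows "comp n (perm_elem n p) (perm_elem n q) = perm_elem n (q \<circ> p)"
proof -
  have "comp n (perm_elem n p) (perm_elem n q) = of_lines n (perm_elem n (q \<circ> p))"
    using glines_of_lines[OF line_system_perm_elem] of_lines_perm_elem p q
    by (simp add: comp_eq_of_lines line_comp_perm_elem bij_betw_imp_surj_on)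
  also have "\<dots> = perm_elem n (q \<circ> p)"
    using bij_betw_trans[OF p q] by (rule of_lines_perm_elem)
  finally show ?thesis .
qed

lemma rank_le:
  assumes "a \<in> PIstar n"
  shows "rank a \<le> n"
proof -
  have L: "line_system n (glines a)"
    using assms by (rule line_system_glines)
  then have "card (glines a) \<le> card {1..n}"
    using line_system_finite[OF L] by (intro card_le_of_disjoint_family[where A = top_part])
      (auto simp: line_system_def)
  then show ?thesis
    by (simp add: rank_def)
qed

lemma full_rank_in_Sym:
  assumes a: "a \<in> PIstar n" and full: "n \<le> rank a"
  shows "a \<in> Sym n"
proof -
  define L where "L = glines a"
  have L: "line_system n L" "finite L" "n \<le> card L"
    using line_system_glines[OF a] line_system_finite full by (simp_all add: L_def rank_def)
  define t where "t = (\<lambda>l. the_elem (top_part l))"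
  define u where "u = (\<lambda>l. the_elem (bot_part l))"
  have top: "top_part l = {t l}" if "l \<in> L" for l
    unfolding t_def using L that
    by (intro disjoint_family_singletons(1)[where S = "{1..n}" and A = top_part]) (auto simp: line_system_def)
  have bot: "bot_part l = {u l}" if "l \<in> L" for l
    unfolding u_def using L that
    by (intro disjoint_family_singletons(1)[where S = "{1..n}" and A = bot_part]) (auto simp: line_system_def)
  have t: "bij_betw t L {1..n}"
    unfolding t_def using L
    by (intro disjoint_family_singletons(2)[where S = "{1..n}" and A = top_part]) (auto simp: line_system_def)
  have u: "bij_betw u L {1..n}"
    unfolding u_def using L
    by (intro disjoint_family_singletons(2)[where S = "{1..n}" and A = bot_part]) (auto simp: line_system_def)
  define p where "p = u \<circ> inv_into L t"
  have p: "bij_betw p {1..n} {1..n}"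
    unfolding p_def by (rule bij_betw_trans[OF bij_betw_inv_into[OF t] u])
  have "perm_elem n p = (\<lambda>i. mk_block {i} {p i}) ` t ` L"
    by (simp add: perm_elem_def bij_betw_imp_surj_on[OF t])
  also have "\<dots> = (\<lambda>l. mk_block {t l} {u l}) ` L"
    unfolding image_image p_def using bij_betw_imp_inj_on[OF t] by (intro image_cong) simp_all
  also have "\<dots> = L"
  proof -
    have "mk_block {t l} {u l} = l" if "l \<in> L" for l
      using mk_block_parts[of l] top[OF that] bot[OF that] by simp
    then show ?thesis
      by (simp cong: image_cong)
  qed
  finally have "a = perm_elem n p"
    using of_lines_glines[OF a] of_lines_perm_elem[OF p] by (simp add: L_def)
  with p show ?thesis
    by (simp add: perm_elem_in_Sym)
qed

lemma Sym_iff_rank: "a \<in> Sym n \<longleftrightarrow> a \<in> PIstar n \<and> rank a = n"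
proof
  assume "a \<in> Sym n"
  then obtain p where "p permutes {1..n}" "a = perm_elem n p"
    by (rule SymE)
  then show "a \<in> PIstar n \<and> rank a = n"
    using permutes_imp_bij perm_elem_in_PIstar rank_perm_elem by blast
qed (simp add: full_rank_in_Sym)

lemma Sym_subset_PIstar: "Sym n \<subseteq> PIstar n"
  by (auto simp: Sym_iff_rank)

lemma comp_in_Sym_imp_factors:
  assumes "a \<in> PIstar n" "b \<in> PIstar n" "comp n a b \<in> Sym n"
  shows "a \<in> Sym n \<and> b \<in> Sym n"
  using assms rank_comp_le[OF assms(1,2)] rank_le[of a n] rank_le[of b n]
  by (auto simp: Sym_iff_rank)

lemma comp_in_Sym:
  assumes "a \<in> Sym n" "b \<in> Sym n"
  shows "comp n a b \<in> Sym n"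
proof -
  obtain p q where "p permutes {1..n}" "a = perm_elem n p" "q permutes {1..n}" "b = perm_elem n q"
    using assms by (meson SymE)
  then show ?thesis
    by (simp add: comp_perm_elem permutes_imp_bij perm_elem_in_Sym permutes_compose)
qed

lemma perm_elem_id_in_comp_closed:
  assumes H: "comp_closed n H" and q: "q permutes {1..n}" and qH: "perm_elem n q \<in> H"
  shows "perm_elem n id \<in> H"
proof -
  have powers: "perm_elem n (q ^^ Suc k) \<in> H" for k
  proof (induction k)
    case (Suc k)
    have "comp n (perm_elem n (q ^^ Suc k)) (perm_elem n q) = perm_elem n (q ^^ Suc (Suc k))"
      using comp_perm_elem[OF permutes_imp_bij[OF permutes_funpow[OF q]] permutes_imp_bij[OF q], of "Suc k"]
      by simp
    with H Suc.IH qH show ?case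
      unfolding comp_closed_def by metis
  qed (use qH in simp)
  obtain m where "q ^^ m = id" "m > 0"
    using permutation_is_nilpotent[OF permutes_imp_permutation[OF _ q]] by auto
  with powers[of "m - 1"] show ?thesis
    by simp
qed

section \<open>Non-units as products of elements with smaller squares\<close>

definition zero_elem :: "nat \<Rightarrow> (nat \<times> bool) set set" where
  "zero_elem n = of_lines n {}"

lemma line_system_empty: "line_system n {}"
  by (simp add: line_system_def disjoint_family_on_def)

lemma zero_elem_in_PIstar: "zero_elem n \<in> PIstar n"
  unfolding zero_elem_def by (rule of_lines_in_PIstar[OF line_system_empty])

lemma rank_zero_elem: "rank (zero_elem n) = 0"
  by (simp add: rank_def zero_elem_def glines_of_lines[OF line_system_empty])

lemma rank_eq_0_imp_zero_elem:
  assumes "a \<in> PIstar n" "rank a = 0"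
  shows "a = zero_elem n"
proof -
  have "glines a = {}"
    using assms line_system_finite[OF line_system_glines[OF assms(1)]] by (simp add: rank_def)
  then show ?thesis
    using of_lines_glines[OF assms(1)] by (simp add: zero_elem_def)
qed

definition split_top :: "((nat \<times> bool) set \<Rightarrow> nat) \<Rightarrow> (nat \<times> bool) set set \<Rightarrow> (nat \<times> bool) set set" where
  "split_top f L = (\<lambda>l. mk_block (top_part l) {f l}) ` L"

definition split_bot :: "((nat \<times> bool) set \<Rightarrow> nat) \<Rightarrow> (nat \<times> bool) set set \<Rightarrow> (nat \<times> bool) set set" where
  "split_bot f L = (\<lambda>l. mk_block {f l} (bot_part l)) ` L"

lemma line_comp_split:
  assumes "inj_on f L"
  shows "line_comp (split_top f L) (split_bot f L) = L"
proof
  show "line_comp (split_top f L) (split_bot f L) \<subseteq> L"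
    using assms unfolding line_comp_def split_top_def split_bot_def by (auto simp: inj_on_eq_iff)
  show "L \<subseteq> line_comp (split_top f L) (split_bot f L)"
  proof
    fix l assume "l \<in> L"
    then show "l \<in> line_comp (split_top f L) (split_bot f L)"
      unfolding line_comp_def split_top_def split_bot_def
      by (intro CollectI exI[of _ "mk_block (top_part l) {f l}"] exI[of _ "mk_block {f l} (bot_part l)"]) simp
  qed
qed

lemma line_system_split:
  assumes L: "line_system n L" and f: "inj_on f L" "f ` L \<subseteq> {1..n}"
  shows "line_system n (split_top f L)" and "line_system n (split_bot f L)"
proof -
  have f_family: "disjoint_family_on (\<lambda>l. {f l}) L"
    using f(1) by (auto simp: disjoint_family_on_def inj_on_eq_iff)
  have parts: "disjoint_family_on top_part L" "disjoint_family_on bot_part L"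
    "\<And>l. l \<in> L \<Longrightarrow> top_part l \<noteq> {} \<and> top_part l \<subseteq> {1..n} \<and> bot_part l \<noteq> {} \<and> bot_part l \<subseteq> {1..n}"
    using L by (simp_all add: line_system_def)
  show "line_system n (split_top f L)"
    unfolding split_top_def by (rule line_system_image) (use parts f_family f(2) in auto)
  show "line_system n (split_bot f L)"
    unfolding split_bot_def by (rule line_system_image) (use parts f_family f(2) in auto)
qed

lemma comp_split:
  assumes a: "a \<in> PIstar n" and f: "inj_on f (glines a)" "f ` glines a \<subseteq> {1..n}"
  shows "comp n (of_lines n (split_top f (glines a))) (of_lines n (split_bot f (glines a))) = a"
  using line_system_split[OF line_system_glines[OF a] f] line_comp_split[OF f(1)] of_lines_glines[OF a]
  by (simp add: comp_eq_of_lines glines_of_lines)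

lemma free_point_exists:
  assumes a: "a \<in> PIstar n" and nonfull: "rank a < n"
  obtains k where "k \<in> {1..n}" "{k} \<notin> top_part ` glines a"
proof (rule ccontr)
  assume "\<not> thesis"
  with that have "(\<lambda>k. {k}) ` {1..n} \<subseteq> top_part ` glines a"
    by blast
  then have "card ((\<lambda>k. {k}) ` {1..n}) \<le> card (top_part ` glines a)"
    using line_system_finite[OF line_system_glines[OF a]] by (intro card_mono) simp_all
  also have "\<dots> \<le> rank a"
    unfolding rank_def using line_system_finite[OF line_system_glines[OF a]] by (rule card_image_le)
  finally show False
    using nonfull by (simp add: card_image)
qed

text \<open>The factorisation \<open>a = x y\<close> routes each line \<open>l\<close> of \<open>a\<close> through a point \<open>f l\<close>, where \<open>f\<close> hits
  a point \<open>k\<close> that is neither the top nor the bottom of a line of \<open>a\<close>; the lines of \<open>x\<close> and \<open>y\<close>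
  through \<open>k\<close> are then lost when squaring.\<close>

lemma square_rank_less_or_factors:
  assumes a: "a \<in> PIstar n" and pos: "0 < rank a" and nonfull: "rank a < n"
  shows "rank (comp n a a) < rank a \<or>
    (\<exists>x \<in> PIstar n. \<exists>y \<in> PIstar n. comp n x y = a \<and> rank (comp n x x) < rank a \<and> rank (comp n y y) < rank a)"
proof (cases "\<exists>l \<in> glines a. \<forall>l' \<in> glines a. bot_part l \<noteq> top_part l'")
  case True
  then show ?thesis
    using rank_comp_less_left[OF a a] by blast
next
  case False
  define L where "L = glines a"
  have L: "line_system n L" "finite L"
    using line_system_glines[OF a] line_system_finite by (simp_all add: L_def)
  obtain k where k: "k \<in> {1..n}" "{k} \<notin> top_part ` L"
    using free_point_exists[OF a nonfull] by (auto simp: L_def)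
  with False have k_bot: "{k} \<notin> bot_part ` L"
    by (auto simp: L_def)
  obtain l0 where l0: "l0 \<in> L"
    using pos by (auto simp: rank_def L_def card_gt_0_iff)
  obtain f where f: "inj_on f L" "f ` L \<subseteq> {1..n}" "f l0 = k"
    using inj_on_into_hitting[OF L(2) _ _ k(1) l0] nonfull by (auto simp: rank_def L_def)
  define X where "X = split_top f L"
  define Y where "Y = split_bot f L"
  have "line_system n X" "line_system n Y"
    unfolding X_def Y_def using line_system_split[OF L(1) f(1,2)] .
  then have x: "of_lines n X \<in> PIstar n" "glines (of_lines n X) = X"
    and y: "of_lines n Y \<in> PIstar n" "glines (of_lines n Y) = Y"
    by (simp_all add: of_lines_in_PIstar glines_of_lines)
  have xy: "comp n (of_lines n X) (of_lines n Y) = a"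
    unfolding X_def Y_def L_def using comp_split[OF a] f(1,2) by (simp add: L_def)
  have sq_x: "rank (comp n (of_lines n X) (of_lines n X)) < rank (of_lines n X)"
    using k(2) f(3) l0 by (intro rank_comp_less_left[OF x(1) x(1), unfolded x(2), of "mk_block (top_part l0) {k}"])
      (auto simp: X_def split_top_def)
  have sq_y: "rank (comp n (of_lines n Y) (of_lines n Y)) < rank (of_lines n Y)"
    using k_bot f(3) l0 by (intro rank_comp_less_right[OF y(1) y(1), unfolded y(2), of "mk_block {k} (bot_part l0)"])
      (auto simp: Y_def split_bot_def)
  have rank_xy: "rank (of_lines n X) \<le> rank a" "rank (of_lines n Y) \<le> rank a"
    unfolding rank_def x(2) y(2) using L(2)
    by (simp_all add: X_def Y_def L_def split_top_def split_bot_def card_image_le)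
  show ?thesis
    using x(1) y(1) xy less_le_trans[OF sq_x rank_xy(1)] less_le_trans[OF sq_y rank_xy(2)] by blast
qed

section \<open>Completely isolated subsemigroups\<close>

lemma completely_isolated_iff:
  "completely_isolated n T \<longleftrightarrow> T \<noteq> {} \<and> T \<subseteq> PIstar n \<and> comp_closed n T \<and> isolated n T"
  by (auto simp: completely_isolated_def subsemigroup_def comp_closed_def isolated_def)

lemma comp_closed_Sym: "comp_closed n (Sym n)"
  by (simp add: comp_closed_def comp_in_Sym)

lemma isolated_Sym: "isolated n (Sym n)"
  by (simp add: isolated_def comp_in_Sym_imp_factors)

lemma nonunits_subset:
  assumes T: "T \<subseteq> PIstar n" "comp_closed n T" "isolated n T" and zero: "zero_elem n \<in> T"
  shows "PIstar n - Sym n \<subseteq> T"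
proof -
  have "a \<in> T" if "a \<in> PIstar n" "rank a < n" for a
    using that
  proof (induction "rank a" arbitrary: a rule: less_induct)
    case less
    have square: "x \<in> T" if x: "x \<in> PIstar n" and "rank (comp n x x) < rank a" for x
    proof -
      have "comp n x x \<in> T"
        using less.hyps[OF that(2) comp_in_PIstar[OF x x]] that(2) less.prems(2) by simp
      with x T(3) show ?thesis
        by (auto simp: isolated_def)
    qed
    show ?case
    proof (cases "rank a = 0")
      case True
      then show ?thesis
        using rank_eq_0_imp_zero_elem[OF less.prems(1)] zero by simp
    next
      case False
      then show ?thesis
        using square_rank_less_or_factors[OF less.prems(1) _ less.prems(2)] square less.prems(1) T(2)
        by (auto simp: comp_closed_def)
    qed
  qed
  then show ?thesis
    using rank_le by (fastforce simp: Sym_iff_rank le_less)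
qed

lemma Sym_subset_or_disjoint:
  assumes T: "comp_closed n T" and complement: "comp_closed n (PIstar n - T)"
  shows "Sym n \<subseteq> T \<or> Sym n \<inter> T = {}"
proof (rule ccontr)
  assume "\<not> ?thesis"
  then obtain g h where g: "g \<in> Sym n" "g \<in> T" and h: "h \<in> Sym n" "h \<notin> T"
    by blast
  have "perm_elem n id \<in> H" if H: "comp_closed n H" and s: "s \<in> Sym n" "s \<in> H" for H s
  proof -
    obtain q where "q permutes {1..n}" "s = perm_elem n q"
      using s(1) by (rule SymE)
    with H s(2) show ?thesis
      by (blast intro: perm_elem_id_in_comp_closed)
  qed
  from this[OF T g] this[OF complement h(1)] h show False
    using Sym_subset_PIstar by blast
qed

lemma completely_isolated_cases:
  assumes "0 < n" and T: "completely_isolated n T"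
  shows "T = PIstar n \<or> T = Sym n \<or> T = PIstar n - Sym n"
proof -
  have T': "T \<noteq> {}" "T \<subseteq> PIstar n" "comp_closed n T" "isolated n T"
    using T by (simp_all add: completely_isolated_iff)
  have U: "comp_closed n (PIstar n - T)" "isolated n (PIstar n - T)"
    using T' by (simp_all add: comp_closed_complement_iff isolated_complement_iff)
  have Sym_cases: "Sym n \<subseteq> T \<or> Sym n \<inter> T = {}"
    using Sym_subset_or_disjoint[OF T'(3) U(1)] .
  show ?thesis
  proof (cases "zero_elem n \<in> T")
    case True
    then have "PIstar n - Sym n \<subseteq> T"
      using nonunits_subset T' by blast
    then show ?thesis
      using Sym_cases T'(2) Sym_subset_PIstar by blast
  next
    case False
    then have "PIstar n - Sym n \<subseteq> PIstar n - T"
      using nonunits_subset[OF _ U] zero_elem_in_PIstar by blast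
    then show ?thesis
      using Sym_cases T'(1,2) Sym_subset_PIstar by blast
  qed
qed

lemma zero_elem_notin_Sym: "0 < n \<Longrightarrow> zero_elem n \<notin> Sym n"
  by (simp add: Sym_iff_rank rank_zero_elem)

lemma completely_isolated_PIstar: "completely_isolated n (PIstar n)"
  using zero_elem_in_PIstar by (auto simp: completely_isolated_iff comp_closed_def isolated_def comp_in_PIstar)

lemma completely_isolated_Sym: "completely_isolated n (Sym n)"
  using perm_elem_in_Sym[of id n] Sym_subset_PIstar
  by (auto simp: completely_isolated_iff comp_closed_Sym isolated_Sym)

lemma completely_isolated_nonunits:
  assumes "0 < n"
  shows "completely_isolated n (PIstar n - Sym n)"
  using zero_elem_in_PIstar[of n] zero_elem_notin_Sym[OF assms] Sym_subset_PIstar[of n]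
  by (auto simp: completely_isolated_iff comp_closed_complement_iff isolated_complement_iff
      comp_closed_Sym isolated_Sym)

theorem mainTheorem10:
  fixes n :: nat
  assumes "n \<ge> 2"
  shows "{T. completely_isolated n T} = {PIstar n, Sym n, PIstar n - Sym n}"
proof -
  have "0 < n"
    using assms by simp
  then show ?thesis
    using completely_isolated_cases completely_isolated_PIstar completely_isolated_Sym
      completely_isolated_nonunits
    by blast
qed

end
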